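(* Let $B\ge2$ and suppose there is a constant $C$ such that for all sufficiently large $n$, $$\inf_{\alpha\in\mathcal{C}_B}\ \min_{k\in[n]}\Bigl|\frac{k}{n}-\alpha\Bigr|\le C\,\frac{\log n}{n^2}.$$ Then there is a constant $C'$ such that for every sufficiently large prime $p$ there exists $k\in\mathbb{Z}_p^\times$ with $D(\psi_k)\le C'\log p$.
   Context: $[n]=\{1,\dots,n\}$. $\mathcal{C}_B$ is the set of irrationals $\alpha=[a_0;a_1,a_2,\dots]$ whose partial quotients are bounded in average by $B$, i.e., $a_1+\dots+a_m\le Bm$ for all $m\ge1$. For $k\in\mathbb{Z}_p^\times$, $\psi_k:\mathbb{Z}_p\to\mathbb{Z}_p$ is the permutation $\psi_k(s)=ks$. An interval of $\mathbb{Z}_n$ is any subset that is the image of an interval of consecutive integers under the projection $\mathbb{Z}\to\mathbb{Z}_n$ (wrap-around allowed). For $S,T\subseteq\mathbb{Z}_n$, $D_T(S)=\bigl|\,|S\cap T|-|S||T|/n\,\bigr|$, and $D(\sigma)=\max_{I,J}D_J(\sigma(I))$ over all intervals $I,J$. *)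

theory Defs
  imports "HOL-Computational_Algebra.Primes" Complex_Main
begin

(* Complete quotients of the continued fraction expansion: x_0 = alpha,
   x_{i+1} = 1 / frac x_i.  Partial quotient a_i = floor x_i (for irrational alpha). *)
fun cf_rem :: "real \<Rightarrow> nat \<Rightarrow> real" where
  "cf_rem \<alpha> 0 = \<alpha>"
| "cf_rem \<alpha> (Suc i) = 1 / frac (cf_rem \<alpha> i)"

definition cf_quot :: "real \<Rightarrow> nat \<Rightarrow> int" where
  "cf_quot \<alpha> i = \<lfloor>cf_rem \<alpha> i\<rfloor>"

definition bounded_avg_cf :: "real \<Rightarrow> real set" where
  "bounded_avg_cf B = {\<alpha>. \<alpha> \<notin> \<rat> \<and>
      (\<forall>m\<ge>1. real_of_int (\<Sum>i=1..m. cf_quot \<alpha> i) \<le> B * real m)}"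

(* Z_n is represented by {0..<n} :: int set; intervals are images of integer intervals *)
definition zintervals :: "nat \<Rightarrow> int set set" where
  "zintervals n = {(\<lambda>x. x mod int n) ` {a..<b} | a b. True}"

definition disc :: "nat \<Rightarrow> int set \<Rightarrow> int set \<Rightarrow> real" where
  "disc n T S = \<bar>real (card (S \<inter> T)) - real (card S) * real (card T) / real n\<bar>"

definition perm_disc :: "nat \<Rightarrow> (int \<Rightarrow> int) \<Rightarrow> real" where
  "perm_disc n \<sigma> = Max {disc n J (\<sigma> ` I) | I J. I \<in> zintervals n \<and> J \<in> zintervals n}"

end

(* For 1 <= k < p, the discrepancy of s |-> k s mod p on a pair of intervals of lengths N and m
   equals the deviation |#{t < N. frac (x + t k/p) < m/p} - N m/p| of an orbit of the rotation by
   k/p.  If k/p is close to some alpha in C_B, Ostrowski's method bounds this deviation: split the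
   orbit greedily into at most a_(j+1) blocks of length q_j for each continued fraction
   denominator q_j of alpha.  Since q_j k/p is within 1/q_(j+1) + q_j |k/p - alpha| of an integer
   coprime to q_j, Hermite's identity shows that each block deviates by at most
   3 + 2 q_j^2 |k/p - alpha|.  As q_j grows at least like 2^(j/2), only 2 log_2 p levels occur,
   and the bound on the average of the partial quotients gives a total of
   6 B (log_2 p + 1) + 2 p^2 |k/p - alpha|.  The hypothesis provides alpha and k with
   p^2 |k/p - alpha| = O(log p), and k = p is excluded because C_B keeps distance at least
   1/(2B + 1) from 1. *)

theory Submission
  imports Defs
begin

section \<open>Multiplication modulo \<open>n\<close> on integer intervals\<close>

lemma inj_on_mult_mod_interval:
  fixes n :: nat and c a b :: int
  assumes cop: "coprime c (int n)" and len: "b - a \<le> int n"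
  shows "inj_on (\<lambda>x. (c * x) mod int n) {a..<b}"
proof (rule inj_onI)
  fix x y assume x: "x \<in> {a..<b}" and y: "y \<in> {a..<b}"
    and eq: "(c * x) mod int n = (c * y) mod int n"
  have "int n dvd c * (x - y)"
    using eq by (simp add: mod_eq_dvd_iff right_diff_distrib)
  with cop have "int n dvd x - y"
    by (simp add: coprime_commute coprime_dvd_mult_right_iff)
  moreover have "\<bar>x - y\<bar> < int n" using x y len by auto
  ultimately show "x = y"
    by (metis abs_of_nat dvd_imp_le_int eq_iff_diff_eq_0 linorder_not_le)
qed

lemma card_image_mult_mod_interval:
  fixes n :: nat and c a b :: int
  assumes "coprime c (int n)" and "b - a \<le> int n"
  shows "card ((\<lambda>x. (c * x) mod int n) ` {a..<b}) = nat (b - a)"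
  using card_image[OF inj_on_mult_mod_interval[OF assms]] by simp

lemma image_mult_mod_interval:
  fixes n :: nat and c a b :: int
  assumes n: "n > 0" and cop: "coprime c (int n)" and len: "int n \<le> b - a"
  shows "(\<lambda>x. (c * x) mod int n) ` {a..<b} = {0..<int n}"
proof -
  let ?f = "\<lambda>x. (c * x) mod int n"
  have "?f ` {a..<a + int n} \<subseteq> {0..<int n}" using n by auto
  moreover have "card (?f ` {a..<a + int n}) = card {0..<int n}"
    using card_image_mult_mod_interval[OF cop, of "a + int n" a] by simp
  ultimately have "?f ` {a..<a + int n} = {0..<int n}"
    by (intro card_subset_eq) auto
  moreover have "?f ` {a..<a + int n} \<subseteq> ?f ` {a..<b}" using len by (intro image_mono) auto
  moreover have "?f ` {a..<b} \<subseteq> {0..<int n}" using n by auto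
  ultimately show ?thesis by blast
qed

lemma mod_in_image_mod_interval_iff:
  fixes n :: nat and c d y :: int
  assumes n: "n > 0" and cd: "c \<le> d" "d - c \<le> int n"
  shows "y mod int n \<in> (\<lambda>x. x mod int n) ` {c..<d} \<longleftrightarrow> (y - c) mod int n < d - c"
proof
  assume "y mod int n \<in> (\<lambda>x. x mod int n) ` {c..<d}"
  then obtain z where z: "z \<in> {c..<d}" "y mod int n = z mod int n" by auto
  have "(y - c) mod int n = (z - c) mod int n" using z(2) by (metis mod_diff_left_eq)
  also have "\<dots> = z - c" using z(1) cd by (intro mod_pos_pos_trivial) auto
  finally show "(y - c) mod int n < d - c" using z(1) by simp
next
  assume "(y - c) mod int n < d - c"
  then have "c + (y - c) mod int n \<in> {c..<d}" using n by simp
  moreover have "(c + (y - c) mod int n) mod int n = y mod int n" by (simp add: mod_add_right_eq)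
  ultimately show "y mod int n \<in> (\<lambda>x. x mod int n) ` {c..<d}" by (metis image_eqI)
qed

lemma frac_of_int_divide_nat:
  fixes y :: int and n :: nat
  shows "frac (of_int y / real n) = of_int (y mod int n) / real n"
proof (cases "n = 0")
  case False
  have "real_of_int y = of_int (y div int n) * real n + of_int (y mod int n)"
    by (metis div_mult_mod_eq of_int_add of_int_mult of_int_of_nat_eq)
  then have "of_int y / real n - of_int (y mod int n) / real n = of_int (y div int n)"
    using False by (simp add: field_simps)
  moreover have "y mod int n < int n" using False by simp
  then have "of_int (y mod int n) < real n" by linarith
  ultimately show ?thesis using False by (simp add: frac_unique_iff)
qed simp

section \<open>Floor sums along rational rotations\<close>

lemma hermite_identity_int:
  fixes q :: nat and m :: int
  assumes q: "q > 0"
  shows "(\<Sum>s<q. (m + int s) div int q) = m"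
proof -
  define h where "h m = (\<Sum>s<q. (m + int s) div int q)" for m
  have step: "h (m + 1) = h m + 1" for m
  proof -
    have "h (m + 1) = (\<Sum>s<Suc q. (m + int s) div int q) - m div int q"
      unfolding h_def by (subst sum.lessThan_Suc_shift) (simp add: algebra_simps)
    also have "\<dots> = h m + (m + int q) div int q - m div int q"
      unfolding h_def by simp
    finally show ?thesis using q by simp
  qed
  have "h 0 = 0" unfolding h_def using q by (intro sum.neutral) auto
  then have "h m = m"
  proof (induction m rule: int_induct[where k = 0])
    case (step2 i)
    then show ?case using step[of "i - 1"] by simp
  qed (use step in simp_all)
  then show ?thesis unfolding h_def .
qed

lemma bij_betw_mult_mod_lessThan:
  fixes q :: nat and r :: int
  assumes q: "q > 0" and cop: "coprime r (int q)"
  shows "bij_betw (\<lambda>t. nat ((int t * r) mod int q)) {..<q} {..<q}"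
proof -
  let ?f = "\<lambda>t. nat ((int t * r) mod int q)"
  have inj: "inj_on (\<lambda>x. (r * x) mod int q) {0..<int q}"
    by (rule inj_on_mult_mod_interval[OF cop]) simp
  have "inj_on ?f {..<q}"
  proof (rule inj_onI)
    fix t t' assume t: "t \<in> {..<q}" "t' \<in> {..<q}" and eq: "?f t = ?f t'"
    have "(r * int t) mod int q = (r * int t') mod int q"
      using eq q by (simp add: nat_eq_iff mult.commute[of r])
    moreover have "int t \<in> {0..<int q}" "int t' \<in> {0..<int q}" using t by simp_all
    ultimately have "int t = int t'"
      by (rule inj_onD[OF inj])
    then show "t = t'" by simp
  qed
  moreover have "?f ` {..<q} \<subseteq> {..<q}" using q by (auto simp: nat_less_iff)
  ultimately show ?thesis
    by (metis bij_betw_def card_image card_lessThan card_subset_eq finite_lessThan)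
qed

lemma sum_floor_add_rational_multiples:
  fixes q :: nat and r :: int and z :: real
  assumes q: "q > 0" and cop: "coprime r (int q)"
  shows "(\<Sum>t<q. \<lfloor>z + real t * r / q\<rfloor>) = \<lfloor>q * z\<rfloor> + (\<Sum>t<q. (int t * r) div int q)"
proof -
  define m where "m = \<lfloor>q * z\<rfloor>"
  have "\<lfloor>z + real t * r / q\<rfloor> = (m + int (nat ((int t * r) mod int q))) div int q + (int t * r) div int q"
    for t
  proof -
    have "z + real t * r / q = (q * z + of_int (int t * r)) / of_int (int q)"
      using q by (simp add: field_simps)
    then have "\<lfloor>z + real t * r / q\<rfloor> = \<lfloor>q * z + of_int (int t * r)\<rfloor> div int q"
      by (metis floor_divide_real_eq_div of_int_of_nat_eq of_nat_0_le_iff)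
    also have "\<lfloor>q * z + of_int (int t * r)\<rfloor> = m + (int t * r) mod int q + (int t * r) div int q * int q"
      unfolding m_def floor_add_int[symmetric] by simp
    also have "\<dots> div int q = (m + (int t * r) mod int q) div int q + (int t * r) div int q"
      using q by (simp only: div_mult_self1 of_nat_0_less_iff of_nat_eq_0_iff)
    finally show ?thesis using q by simp
  qed
  then have "(\<Sum>t<q. \<lfloor>z + real t * r / q\<rfloor>)
      = (\<Sum>t<q. (m + int (nat ((int t * r) mod int q))) div int q) + (\<Sum>t<q. (int t * r) div int q)"
    by (simp only: sum.distrib)
  also have "(\<Sum>t<q. (m + int (nat ((int t * r) mod int q))) div int q) = (\<Sum>s<q. (m + int s) div int q)"
    using sum.reindex_bij_betw[OF bij_betw_mult_mod_lessThan[OF q cop], of "\<lambda>s. (m + int s) div int q"]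
    by simp
  also have "\<dots> = m" using hermite_identity_int[OF q] .
  finally show ?thesis unfolding m_def .
qed

section \<open>Orbit counts of rotations of the circle\<close>

definition orbit_count :: "real \<Rightarrow> real \<Rightarrow> real \<Rightarrow> nat \<Rightarrow> real" where
  "orbit_count \<beta> l x N = (\<Sum>t<N. if frac (x + real t * \<beta>) < l then 1 else 0)"

lemma indicator_frac_less_eq_floor_diff:
  fixes y l :: real
  assumes "0 \<le> l" "l \<le> 1"
  shows "(if frac y < l then 1 else 0) = real_of_int (\<lfloor>y\<rfloor> - \<lfloor>y - l\<rfloor>)"
proof -
  have "\<lfloor>y - l\<rfloor> = (if frac y < l then \<lfloor>y\<rfloor> - 1 else \<lfloor>y\<rfloor>)"
    using assms by (intro floor_unique) (auto simp: frac_def, linarith+)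
  then show ?thesis by simp
qed

lemma orbit_count_eq_floor_sums:
  assumes "0 \<le> l" "l \<le> 1"
  shows "orbit_count \<beta> l x N
    = real_of_int ((\<Sum>t<N. \<lfloor>x + real t * \<beta>\<rfloor>) - (\<Sum>t<N. \<lfloor>(x - l) + real t * \<beta>\<rfloor>))"
proof -
  have "orbit_count \<beta> l x N = (\<Sum>t<N. real_of_int (\<lfloor>x + real t * \<beta>\<rfloor> - \<lfloor>(x - l) + real t * \<beta>\<rfloor>))"
    unfolding orbit_count_def
    by (intro sum.cong refl) (simp add: indicator_frac_less_eq_floor_diff[OF assms] algebra_simps)
  then show ?thesis by (simp only: of_int_diff of_int_sum sum_subtractf)
qed

lemma orbit_count_add:
  "orbit_count \<beta> l x (M + N) = orbit_count \<beta> l x M + orbit_count \<beta> l (x + real M * \<beta>) N"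
  by (induction N) (simp_all add: orbit_count_def algebra_simps)

lemma of_int_floor_diff_bounds:
  fixes a b :: real
  shows "a - b - 1 < of_int (\<lfloor>a\<rfloor> - \<lfloor>b\<rfloor>)" and "of_int (\<lfloor>a\<rfloor> - \<lfloor>b\<rfloor>) < a - b + 1"
  by linarith+

lemma sum_floor_orbit_bounds:
  fixes q :: nat and r :: int and \<beta> w :: real
  assumes q: "q > 0" and cop: "coprime r (int q)"
  defines "D \<equiv> \<bar>q * \<beta> - r\<bar>" and "K \<equiv> (\<Sum>t<q. (int t * r) div int q)"
  shows "\<lfloor>q * (w - D)\<rfloor> + K \<le> (\<Sum>t<q. \<lfloor>w + real t * \<beta>\<rfloor>)"
    and "(\<Sum>t<q. \<lfloor>w + real t * \<beta>\<rfloor>) \<le> \<lfloor>q * (w + D)\<rfloor> + K"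
proof -
  have close: "\<bar>real t * \<beta> - real t * r / q\<bar> \<le> D" if "t < q" for t
  proof -
    have "real t * \<beta> - real t * r / q = (real t / q) * (q * \<beta> - r)"
      using q by (simp add: field_simps)
    then have "\<bar>real t * \<beta> - real t * r / q\<bar> = (real t / q) * D"
      unfolding D_def by (simp add: abs_mult)
    also have "\<dots> \<le> 1 * D"
      using that unfolding D_def by (intro mult_right_mono) simp_all
    finally show ?thesis by simp
  qed
  have "(\<Sum>t<q. \<lfloor>(w - D) + real t * r / q\<rfloor>) \<le> (\<Sum>t<q. \<lfloor>w + real t * \<beta>\<rfloor>)"
    using close by (intro sum_mono floor_mono) (force simp: abs_le_iff)
  then show "\<lfloor>q * (w - D)\<rfloor> + K \<le> (\<Sum>t<q. \<lfloor>w + real t * \<beta>\<rfloor>)"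
    unfolding K_def sum_floor_add_rational_multiples[OF q cop] .
  have "(\<Sum>t<q. \<lfloor>w + real t * \<beta>\<rfloor>) \<le> (\<Sum>t<q. \<lfloor>(w + D) + real t * r / q\<rfloor>)"
    using close by (intro sum_mono floor_mono) (force simp: abs_le_iff)
  then show "(\<Sum>t<q. \<lfloor>w + real t * \<beta>\<rfloor>) \<le> \<lfloor>q * (w + D)\<rfloor> + K"
    unfolding K_def sum_floor_add_rational_multiples[OF q cop] .
qed

lemma orbit_count_rational_deviation:
  fixes q :: nat and r :: int and \<beta> l x :: real
  assumes q: "q > 0" and cop: "coprime r (int q)" and l: "0 \<le> l" "l \<le> 1"
  shows "\<bar>orbit_count \<beta> l x q - real q * l\<bar> \<le> 1 + 2 * real q * \<bar>real q * \<beta> - r\<bar>"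
proof -
  define D where "D = \<bar>q * \<beta> - r\<bar>"
  note bounds = sum_floor_orbit_bounds[OF q cop, where \<beta> = \<beta>, folded D_def]
  have "orbit_count \<beta> l x q \<le> real_of_int (\<lfloor>q * (x + D)\<rfloor> - \<lfloor>q * (x - l - D)\<rfloor>)"
    unfolding orbit_count_eq_floor_sums[OF l] using bounds(1)[of "x - l"] bounds(2)[of x]
    by (simp only: of_int_le_iff)
  also have "\<dots> \<le> q * (x + D) - q * (x - l - D) + 1"
    using of_int_floor_diff_bounds(2) by (rule less_imp_le)
  finally have upper: "orbit_count \<beta> l x q \<le> q * l + 2 * q * D + 1"
    by (simp add: algebra_simps)
  have "q * (x - D) - q * (x - l + D) - 1 \<le> real_of_int (\<lfloor>q * (x - D)\<rfloor> - \<lfloor>q * (x - l + D)\<rfloor>)"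
    using of_int_floor_diff_bounds(1) by (rule less_imp_le)
  also have "\<dots> \<le> orbit_count \<beta> l x q"
    unfolding orbit_count_eq_floor_sums[OF l] using bounds(1)[of x] bounds(2)[of "x - l"]
    by (simp only: of_int_le_iff)
  finally have "q * l - 2 * q * D - 1 \<le> orbit_count \<beta> l x q"
    by (simp add: algebra_simps)
  with upper show ?thesis unfolding D_def by (simp add: abs_le_iff algebra_simps)
qed

lemma orbit_count_blocks_deviation:
  fixes b q :: nat and l E :: real
  assumes "\<And>y. \<bar>orbit_count \<beta> l y q - real q * l\<bar> \<le> E"
  shows "\<bar>orbit_count \<beta> l x (b * q) - real (b * q) * l\<bar> \<le> real b * E"
proof (induction b arbitrary: x)
  case 0
  then show ?case by (simp add: orbit_count_def)
next
  case (Suc b)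
  have "Suc b * q = b * q + q" by simp
  then have "orbit_count \<beta> l x (Suc b * q) = orbit_count \<beta> l x (b * q) + orbit_count \<beta> l (x + real (b * q) * \<beta>) q"
    by (simp only: orbit_count_add)
  then show ?case using Suc[of x] assms[of "x + real (b * q) * \<beta>"]
    by (simp add: abs_le_iff algebra_simps)
qed

lemma orbit_count_approximate_block_deviation:
  fixes q :: nat and r :: int and \<beta> l \<eta> x Q' :: real
  assumes q: "q > 0" "real q \<le> Q'" and cop: "coprime r (int q)" and l: "0 \<le> l" "l \<le> 1"
    and appr: "\<bar>q * \<beta> - r\<bar> \<le> 1 / Q' + q * \<eta>"
  shows "\<bar>orbit_count \<beta> l x q - real q * l\<bar> \<le> 3 + 2 * \<eta> * (real q)\<^sup>2"
proof -
  have "2 * real q * \<bar>q * \<beta> - r\<bar> \<le> 2 * real q * (1 / Q' + q * \<eta>)"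
    using appr by (intro mult_left_mono) auto
  also have "\<dots> = 2 * (q / Q') + 2 * \<eta> * (real q)\<^sup>2" by (simp add: algebra_simps power2_eq_square)
  also have "q / Q' \<le> 1" using q by (simp add: divide_le_eq_1)
  finally show ?thesis using orbit_count_rational_deviation[OF q(1) cop l, of \<beta> x] by linarith
qed

lemma recurrence_mono:
  fixes Q a :: "nat \<Rightarrow> int"
  assumes "Q 0 = 0" and "Q 1 = 1"
    and "\<And>n. Q (n + 2) = a (n + 1) * Q (n + 1) + Q n" and "\<And>n. a (n + 1) \<ge> 1"
  shows "0 \<le> Q n \<and> Q n \<le> Q (n + 1) \<and> 1 \<le> Q (n + 1)"
proof (induction n)
  case (Suc n)
  have "Q (Suc n + 1) = a (n + 1) * Q (n + 1) + Q n" "Q (Suc n) = Q (n + 1)"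
    using assms(3)[of n] by (simp_all add: numeral_2_eq_2)
  moreover have "1 * Q (n + 1) \<le> a (n + 1) * Q (n + 1)"
    using Suc assms(4)[of n] by (intro mult_right_mono) auto
  ultimately show ?case using Suc by (intro conjI; linarith)
qed (use assms in simp)

lemma sum_squares_le_square_sum:
  fixes b q r :: nat
  shows "b * q\<^sup>2 + r\<^sup>2 \<le> (b * q + r)\<^sup>2"
proof -
  have "b * q\<^sup>2 \<le> (b * b) * q\<^sup>2" by (intro mult_le_mono1 le_square)
  then have "b * q\<^sup>2 \<le> (b * q)\<^sup>2" by (simp add: power_mult_distrib power2_eq_square)
  moreover have "(b * q)\<^sup>2 + r\<^sup>2 \<le> (b * q + r)\<^sup>2" by (simp add: power2_sum)
  ultimately show ?thesis by linarith
qed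

lemma div_le_of_less_Suc_mult:
  fixes N q :: nat and c :: int
  assumes "q > 0" and "int N < (c + 1) * int q"
  shows "int (N div q) \<le> c"
proof -
  have "int (N div q) * int q \<le> int N" by (simp flip: of_nat_mult)
  then have "int (N div q) * int q < (c + 1) * int q" using assms(2) by linarith
  then show ?thesis using assms(1) by (simp add: mult_less_cancel_right)
qed

lemma orbit_count_ostrowski_deviation:
  fixes Q P a :: "nat \<Rightarrow> int" and \<beta> \<eta> l x :: real and N n :: nat
  assumes Q0: "Q 0 = 0" and Q1: "Q 1 = 1"
    and Qrec: "\<And>n. Q (n + 2) = a (n + 1) * Q (n + 1) + Q n"
    and apos: "\<And>n. a (n + 1) \<ge> 1"
    and cop: "\<And>n. coprime (P (n + 1)) (Q (n + 1))"
    and appr: "\<And>n. \<bar>Q (n + 1) * \<beta> - P (n + 1)\<bar> \<le> 1 / Q (n + 2) + Q (n + 1) * \<eta>"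
    and l: "0 \<le> l" "l \<le> 1" and \<eta>: "\<eta> \<ge> 0"
    and N: "N < Q (n + 1)"
  shows "\<bar>orbit_count \<beta> l x N - N * l\<bar> \<le> 3 * (\<Sum>j=1..n. a j) + 2 * \<eta> * N\<^sup>2"
  using N
proof (induction n arbitrary: N x)
  case 0
  then show ?case using Q1 by (simp add: orbit_count_def)
next
  case (Suc n)
  note mono = recurrence_mono[OF Q0 Q1 Qrec apos]
  define q where "q = nat (Q (n + 1))"
  have q: "int q = Q (n + 1)" "real q = Q (n + 1)" "q > 0" using mono[of n] by (auto simp: q_def)
  \<comment> \<open>\<open>N\<close> splits into at most \<open>a (n + 1)\<close> blocks of length \<open>Q (n + 1)\<close> and a shorter rest.\<close>
  define b r where "b = N div q" and "r = N mod q"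
  have N_eq: "N = b * q + r" and "r < q" using q by (simp_all add: b_def r_def)
  have "int N < (a (n + 1) + 1) * int q"
    using Suc.prems Qrec[of n] mono[of n] q by (simp add: numeral_2_eq_2 algebra_simps)
  then have b_le: "real b \<le> a (n + 1)"
    unfolding b_def using div_le_of_less_Suc_mult[OF q(3)] by (metis of_int_le_iff of_int_of_nat_eq)
  have block: "\<bar>orbit_count \<beta> l y q - q * l\<bar> \<le> 3 + 2 * \<eta> * (real q)\<^sup>2" for y
  proof (rule orbit_count_approximate_block_deviation[where Q' = "Q (n + 2)" and r = "P (n + 1)"])
    show "real q \<le> Q (n + 2)" using q mono[of "n + 1"] by (simp add: numeral_2_eq_2)
    show "coprime (P (n + 1)) (int q)" using cop[of n] q by simp
    show "\<bar>q * \<beta> - P (n + 1)\<bar> \<le> 1 / Q (n + 2) + q * \<eta>" using appr[of n] q(2) by simp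
  qed (use q l in auto)
  have blocks: "\<bar>orbit_count \<beta> l x (b * q) - real (b * q) * l\<bar> \<le> b * (3 + 2 * \<eta> * (real q)\<^sup>2)"
    by (rule orbit_count_blocks_deviation) (rule block)
  have rest: "\<bar>orbit_count \<beta> l (x + real (b * q) * \<beta>) r - r * l\<bar> \<le> 3 * (\<Sum>j=1..n. a j) + 2 * \<eta> * r\<^sup>2"
    using Suc.IH \<open>r < q\<close> q by simp
  have "orbit_count \<beta> l x N = orbit_count \<beta> l x (b * q) + orbit_count \<beta> l (x + real (b * q) * \<beta>) r"
    unfolding N_eq by (rule orbit_count_add)
  then have "\<bar>orbit_count \<beta> l x N - N * l\<bar>
      \<le> b * (3 + 2 * \<eta> * (real q)\<^sup>2) + (3 * (\<Sum>j=1..n. a j) + 2 * \<eta> * r\<^sup>2)"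
    using blocks rest N_eq by (simp add: abs_le_iff algebra_simps)
  also have "\<dots> \<le> 3 * (\<Sum>j=1..n. a j) + 3 * a (n + 1) + 2 * \<eta> * (b * q\<^sup>2 + r\<^sup>2)"
    using b_le \<eta> by (simp add: algebra_simps)
  also have "\<dots> \<le> 3 * (\<Sum>j=1..n. a j) + 3 * a (n + 1) + 2 * \<eta> * N\<^sup>2"
  proof -
    have "real (b * q\<^sup>2 + r\<^sup>2) \<le> real (N\<^sup>2)"
      unfolding N_eq of_nat_le_iff by (rule sum_squares_le_square_sum)
    then show ?thesis using \<eta> by (simp add: mult_left_mono)
  qed
  finally show ?case by simp
qed

section \<open>Convergents of continued fractions\<close>

text \<open>Convergents are indexed with a shift by one: \<open>cf_num \<alpha> (n + 1) / cf_denom \<alpha> (n + 1)\<close> is the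
  \<open>n\<close>-th convergent \<open>p\<^sub>n / q\<^sub>n\<close>, and index \<open>0\<close> holds \<open>p\<^sub>-\<^sub>1 = 1\<close>, \<open>q\<^sub>-\<^sub>1 = 0\<close>.\<close>

fun cf_denom :: "real \<Rightarrow> nat \<Rightarrow> int" where
  "cf_denom \<alpha> 0 = 0"
| "cf_denom \<alpha> (Suc 0) = 1"
| "cf_denom \<alpha> (Suc (Suc n)) = cf_quot \<alpha> (Suc n) * cf_denom \<alpha> (Suc n) + cf_denom \<alpha> n"

fun cf_num :: "real \<Rightarrow> nat \<Rightarrow> int" where
  "cf_num \<alpha> 0 = 1"
| "cf_num \<alpha> (Suc 0) = cf_quot \<alpha> 0"
| "cf_num \<alpha> (Suc (Suc n)) = cf_quot \<alpha> (Suc n) * cf_num \<alpha> (Suc n) + cf_num \<alpha> n"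

definition cf_error :: "real \<Rightarrow> nat \<Rightarrow> real" where
  "cf_error \<alpha> n = real_of_int (cf_denom \<alpha> n) * \<alpha> - real_of_int (cf_num \<alpha> n)"

lemma cf_num_cf_denom_det:
  "cf_num \<alpha> (Suc n) * cf_denom \<alpha> n - cf_num \<alpha> n * cf_denom \<alpha> (Suc n) = (-1) ^ Suc n"
proof (induction n)
  case (Suc n)
  have "cf_num \<alpha> (Suc (Suc n)) * cf_denom \<alpha> (Suc n) - cf_num \<alpha> (Suc n) * cf_denom \<alpha> (Suc (Suc n))
      = - (cf_num \<alpha> (Suc n) * cf_denom \<alpha> n - cf_num \<alpha> n * cf_denom \<alpha> (Suc n))"
    by (simp add: algebra_simps)
  then show ?case using Suc by simp
qed simp

lemma coprime_cf_num_cf_denom: "coprime (cf_num \<alpha> (Suc n)) (cf_denom \<alpha> (Suc n))"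
proof (rule coprimeI)
  fix c assume "c dvd cf_num \<alpha> (Suc n)" "c dvd cf_denom \<alpha> (Suc n)"
  then have "c dvd cf_num \<alpha> (Suc n) * cf_denom \<alpha> n - cf_num \<alpha> n * cf_denom \<alpha> (Suc n)"
    by (intro dvd_diff dvd_mult2 dvd_mult)
  then show "is_unit c" unfolding cf_num_cf_denom_det by (rule dvd_unit_imp_unit) simp
qed

context
  fixes \<alpha> :: real
  assumes irrational: "\<alpha> \<notin> \<rat>"
begin

lemma cf_rem_notin_Rats: "cf_rem \<alpha> n \<notin> \<rat>"
proof (induction n)
  case (Suc n)
  then show ?case
    by (metis Rats_inverse cf_rem.simps(2) frac_in_Rats_iff inverse_eq_divide inverse_inverse_eq)
qed (use irrational in simp)

lemma frac_cf_rem_pos: "frac (cf_rem \<alpha> n) > 0"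
  using cf_rem_notin_Rats[of n] Ints_subset_Rats by (auto simp: frac_gt_0_iff)

lemma cf_rem_Suc_gt_1: "cf_rem \<alpha> (Suc n) > 1"
  using frac_cf_rem_pos[of n] frac_lt_1[of "cf_rem \<alpha> n"] by (simp add: field_simps)

lemma cf_quot_Suc_ge_1: "cf_quot \<alpha> (Suc n) \<ge> 1"
  unfolding cf_quot_def using cf_rem_Suc_gt_1[of n] by (simp add: le_floor_iff)

lemma cf_rem_eq_quot_plus_inverse: "cf_rem \<alpha> n = cf_quot \<alpha> n + 1 / cf_rem \<alpha> (Suc n)"
  using frac_cf_rem_pos[of n] by (simp add: cf_quot_def frac_def)

lemma cf_denom_mono: "0 \<le> cf_denom \<alpha> n \<and> cf_denom \<alpha> n \<le> cf_denom \<alpha> (n + 1) \<and> 1 \<le> cf_denom \<alpha> (n + 1)"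
proof (rule recurrence_mono)
  show "cf_denom \<alpha> (n + 2) = cf_quot \<alpha> (n + 1) * cf_denom \<alpha> (n + 1) + cf_denom \<alpha> n" for n
    by (simp add: numeral_2_eq_2)
qed (use cf_quot_Suc_ge_1 in simp_all)

declare cf_rem.simps(2)[simp del]

lemma cf_rem_mult_cf_error: "cf_rem \<alpha> (Suc n) * cf_error \<alpha> (Suc n) = - cf_error \<alpha> n"
proof (induction n)
  case 0
  have "cf_error \<alpha> 1 = frac \<alpha>" "cf_error \<alpha> 0 = -1"
    by (simp_all add: cf_error_def cf_quot_def frac_def)
  then show ?case using frac_cf_rem_pos[of 0] by (simp add: cf_rem.simps(2))
next
  case (Suc n)
  define y where "y = cf_rem \<alpha> (Suc (Suc n))"
  have y: "y * frac (cf_rem \<alpha> (Suc n)) = 1"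
    unfolding y_def using frac_cf_rem_pos[of "Suc n"] by (simp add: cf_rem.simps(2))
  have "y * cf_error \<alpha> (Suc (Suc n)) = y * (cf_quot \<alpha> (Suc n) * cf_error \<alpha> (Suc n) + cf_error \<alpha> n)"
    by (simp add: cf_error_def algebra_simps)
  also have "\<dots> = y * (cf_quot \<alpha> (Suc n) * cf_error \<alpha> (Suc n) - cf_rem \<alpha> (Suc n) * cf_error \<alpha> (Suc n))"
    using Suc by simp
  also have "\<dots> = - (y * frac (cf_rem \<alpha> (Suc n))) * cf_error \<alpha> (Suc n)"
    by (simp add: frac_def cf_quot_def algebra_simps)
  finally show ?case unfolding y by (simp add: y_def)
qed

lemma abs_cf_error_mult:
  "\<bar>cf_error \<alpha> (Suc n)\<bar> * (cf_rem \<alpha> (Suc n) * cf_denom \<alpha> (Suc n) + cf_denom \<alpha> n) = 1"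
proof (induction n)
  case 0
  have "cf_error \<alpha> 1 = frac \<alpha>" by (simp add: cf_error_def cf_quot_def frac_def)
  then show ?case using frac_cf_rem_pos[of 0] by (simp add: cf_rem.simps(2))
next
  case (Suc n)
  define y where "y = cf_rem \<alpha> (Suc (Suc n))"
  have y: "y > 0" unfolding y_def using cf_rem_Suc_gt_1[of "Suc n"] by linarith
  have "y * \<bar>cf_error \<alpha> (Suc (Suc n))\<bar> = \<bar>cf_error \<alpha> (Suc n)\<bar>"
    using arg_cong[OF cf_rem_mult_cf_error[of "Suc n"], of abs] y
    unfolding y_def[symmetric] abs_mult abs_minus_cancel by simp
  moreover have "y * cf_denom \<alpha> (Suc (Suc n)) + cf_denom \<alpha> (Suc n)
      = y * (cf_rem \<alpha> (Suc n) * cf_denom \<alpha> (Suc n) + cf_denom \<alpha> n)"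
  proof -
    have yr: "y * cf_rem \<alpha> (Suc n) = y * cf_quot \<alpha> (Suc n) + 1"
      using cf_rem_eq_quot_plus_inverse[of "Suc n"] y unfolding y_def[symmetric] by (simp add: field_simps)
    have "y * (cf_rem \<alpha> (Suc n) * cf_denom \<alpha> (Suc n) + cf_denom \<alpha> n)
        = (y * cf_rem \<alpha> (Suc n)) * cf_denom \<alpha> (Suc n) + y * cf_denom \<alpha> n"
      by (simp add: algebra_simps)
    also have "\<dots> = y * cf_denom \<alpha> (Suc (Suc n)) + cf_denom \<alpha> (Suc n)"
      unfolding yr by (simp add: algebra_simps)
    finally show ?thesis by simp
  qed
  ultimately have "\<bar>cf_error \<alpha> (Suc (Suc n))\<bar> * (y * cf_denom \<alpha> (Suc (Suc n)) + cf_denom \<alpha> (Suc n))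
      = \<bar>cf_error \<alpha> (Suc n)\<bar> * (cf_rem \<alpha> (Suc n) * cf_denom \<alpha> (Suc n) + cf_denom \<alpha> n)"
    by (metis mult.assoc mult.left_commute)
  then show ?case unfolding y_def Suc .
qed

lemma cf_approximation:
  "\<bar>cf_denom \<alpha> (Suc n) * \<alpha> - cf_num \<alpha> (Suc n)\<bar> \<le> 1 / cf_denom \<alpha> (Suc (Suc n))"
proof -
  define d where "d = cf_rem \<alpha> (Suc n) * cf_denom \<alpha> (Suc n) + cf_denom \<alpha> n"
  have "real_of_int (cf_denom \<alpha> (Suc (Suc n)))
      = cf_quot \<alpha> (Suc n) * real_of_int (cf_denom \<alpha> (Suc n)) + cf_denom \<alpha> n"
    by simp
  also have "\<dots> \<le> d"
    unfolding d_def using cf_denom_mono[of n] cf_quot_def[of \<alpha> "Suc n"]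
    by (intro add_right_mono mult_right_mono) auto
  finally have Qd: "cf_denom \<alpha> (Suc (Suc n)) \<le> d" .
  have "1 \<le> cf_denom \<alpha> (Suc (Suc n))" using cf_denom_mono[of "Suc n"] by simp
  then have Q1: "1 \<le> real_of_int (cf_denom \<alpha> (Suc (Suc n)))" by (metis of_int_1 of_int_le_iff)
  have "1 / d \<le> 1 / cf_denom \<alpha> (Suc (Suc n))"
  proof (rule divide_left_mono[OF Qd])
    show "0 < d * cf_denom \<alpha> (Suc (Suc n))" using Q1 Qd by (intro mult_pos_pos) linarith+
  qed simp
  moreover have "\<bar>cf_error \<alpha> (Suc n)\<bar> = 1 / d"
    using abs_cf_error_mult[of n] unfolding d_def[symmetric]
    by (metis mult_eq_0_iff nonzero_eq_divide_eq one_neq_zero)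
  ultimately show ?thesis unfolding cf_error_def by simp
qed

lemma cf_denom_odd_ge_pow2: "2 ^ n \<le> cf_denom \<alpha> (2 * n + 1)"
proof (induction n)
  case (Suc n)
  have "cf_denom \<alpha> (2 * Suc n + 1)
      = cf_quot \<alpha> (2 * n + 2) * cf_denom \<alpha> (2 * n + 2) + cf_denom \<alpha> (2 * n + 1)"
    by (simp add: numeral_2_eq_2)
  moreover have "1 * cf_denom \<alpha> (2 * n + 2) \<le> cf_quot \<alpha> (2 * n + 2) * cf_denom \<alpha> (2 * n + 2)"
    using cf_quot_Suc_ge_1[of "2 * n + 1"] cf_denom_mono[of "2 * n + 1"]
    by (intro mult_right_mono) (simp_all add: numeral_2_eq_2)
  moreover have "cf_denom \<alpha> (2 * n + 1) \<le> cf_denom \<alpha> (2 * n + 2)"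
    using cf_denom_mono[of "2 * n + 1"] by (simp add: numeral_2_eq_2)
  ultimately show ?case using Suc by simp
qed simp

end

lemma orbit_count_cf_deviation:
  fixes \<alpha> \<beta> l x :: real and N n :: nat
  assumes irr: "\<alpha> \<notin> \<rat>" and l: "0 \<le> l" "l \<le> 1" and N: "N < cf_denom \<alpha> (n + 1)"
  shows "\<bar>orbit_count \<beta> l x N - N * l\<bar> \<le> 3 * (\<Sum>j=1..n. cf_quot \<alpha> j) + 2 * \<bar>\<beta> - \<alpha>\<bar> * N\<^sup>2"
proof (rule orbit_count_ostrowski_deviation[where P = "cf_num \<alpha>"])
  show "cf_denom \<alpha> (n + 2) = cf_quot \<alpha> (n + 1) * cf_denom \<alpha> (n + 1) + cf_denom \<alpha> n" for n
    by (simp add: numeral_2_eq_2)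
  show "1 \<le> cf_quot \<alpha> (n + 1)" for n using cf_quot_Suc_ge_1[OF irr] by simp
  show "coprime (cf_num \<alpha> (n + 1)) (cf_denom \<alpha> (n + 1))" for n
    using coprime_cf_num_cf_denom by simp
  show "\<bar>cf_denom \<alpha> (n + 1) * \<beta> - cf_num \<alpha> (n + 1)\<bar>
      \<le> 1 / cf_denom \<alpha> (n + 2) + cf_denom \<alpha> (n + 1) * \<bar>\<beta> - \<alpha>\<bar>" for n
  proof -
    have "cf_denom \<alpha> (n + 1) * \<beta> - cf_num \<alpha> (n + 1)
        = (cf_denom \<alpha> (n + 1) * \<alpha> - cf_num \<alpha> (n + 1)) + cf_denom \<alpha> (n + 1) * (\<beta> - \<alpha>)"
      by (simp add: algebra_simps)
    moreover have "\<bar>cf_denom \<alpha> (n + 1) * (\<beta> - \<alpha>)\<bar> = cf_denom \<alpha> (n + 1) * \<bar>\<beta> - \<alpha>\<bar>"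
      using cf_denom_mono[OF irr, of n] by (simp add: abs_mult)
    moreover have "\<bar>cf_denom \<alpha> (n + 1) * \<alpha> - cf_num \<alpha> (n + 1)\<bar> \<le> 1 / cf_denom \<alpha> (n + 2)"
      using cf_approximation[OF irr, of n] by (simp add: numeral_2_eq_2)
    ultimately show ?thesis
      using abs_triangle_ineq[of "cf_denom \<alpha> (n + 1) * \<alpha> - cf_num \<alpha> (n + 1)" "cf_denom \<alpha> (n + 1) * (\<beta> - \<alpha>)"]
      by linarith
  qed
qed (use l N in simp_all)

section \<open>Discrepancy of multiplication maps\<close>

lemma disc_of_full:
  assumes "T \<subseteq> {0..<int n}"
  shows "disc n T {0..<int n} = 0"
proof -
  have "{0..<int n} \<inter> T = T" using assms by blast
  then show ?thesis using assms by (cases "n = 0") (auto simp: disc_def)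
qed

lemma disc_against_full:
  assumes "S \<subseteq> {0..<int n}"
  shows "disc n {0..<int n} S = 0"
proof -
  have "S \<inter> {0..<int n} = S" using assms by blast
  then show ?thesis using assms by (cases "n = 0") (auto simp: disc_def)
qed

lemma card_inter_mult_mod_interval_eq_orbit_count:
  fixes p :: nat and k a b c d :: int
  assumes p: "p > 0" and cop: "coprime k (int p)"
    and ab: "a \<le> b" "b - a \<le> int p" and cd: "c \<le> d" "d - c \<le> int p"
  shows "real (card ((\<lambda>x. (k * x) mod int p) ` {a..<b} \<inter> (\<lambda>x. x mod int p) ` {c..<d}))
    = orbit_count (of_int k / p) (of_int (d - c) / p) (of_int (k * a - c) / p) (nat (b - a))"
proof -
  define P where "P x \<longleftrightarrow> (k * x - c) mod int p < d - c" for x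
  have "(k * x) mod int p \<in> (\<lambda>x. x mod int p) ` {c..<d} \<longleftrightarrow> P x" for x
    unfolding P_def mod_in_image_mod_interval_iff[OF p cd] by (simp add: mod_diff_left_eq)
  then have "(\<lambda>x. (k * x) mod int p) ` {a..<b} \<inter> (\<lambda>x. x mod int p) ` {c..<d}
      = (\<lambda>x. (k * x) mod int p) ` {x \<in> {a..<b}. P x}"
    by blast
  moreover have "inj_on (\<lambda>x. (k * x) mod int p) {x \<in> {a..<b}. P x}"
    using inj_on_mult_mod_interval[OF cop ab(2)] by (rule inj_on_subset) blast
  ultimately have "real (card ((\<lambda>x. (k * x) mod int p) ` {a..<b} \<inter> (\<lambda>x. x mod int p) ` {c..<d}))
      = (\<Sum>x\<in>{a..<b}. if P x then 1 else 0)"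
    by (simp add: card_image sum.inter_filter[symmetric])
  also have "\<dots> = (\<Sum>t<nat (b - a). if P (int t + a) then 1 else 0)"
  proof -
    have "{a..<b} = (\<lambda>t. int t + a) ` {..<nat (b - a)}"
      using image_add_int_atLeastLessThan[of a b] image_atLeastZeroLessThan_int[of "b - a"] ab
      by (simp add: image_image)
    then show ?thesis by (simp add: sum.reindex inj_on_def)
  qed
  also have "\<dots> = orbit_count (of_int k / p) (of_int (d - c) / p) (of_int (k * a - c) / p) (nat (b - a))"
    unfolding orbit_count_def
  proof (intro sum.cong refl)
    fix t
    have "of_int (k * a - c) / p + real t * (of_int k / p) = of_int (k * (int t + a) - c) / real p"
      using p by (simp add: field_simps)
    then have "frac (of_int (k * a - c) / p + real t * (of_int k / p))
        = of_int ((k * (int t + a) - c) mod int p) / real p"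
      by (simp only: frac_of_int_divide_nat)
    then show "(if P (int t + a) then 1 else 0)
        = (if frac (of_int (k * a - c) / p + real t * (of_int k / p)) < of_int (d - c) / p then 1 else 0)"
      using p by (simp add: P_def divide_less_cancel)
  qed
  finally show ?thesis .
qed

lemma disc_mult_mod_interval_le:
  fixes p :: nat and k a b c d :: int and K :: real
  assumes p: "p > 0" and cop: "coprime k (int p)" and K: "K \<ge> 0"
    and orbit: "\<And>x N m. N < p \<Longrightarrow> 0 < m \<Longrightarrow> m < p \<Longrightarrow>
      \<bar>orbit_count (of_int k / p) (real m / p) x N - real N * (real m / p)\<bar> \<le> K"
  shows "disc p ((\<lambda>x. x mod int p) ` {c..<d}) ((\<lambda>x. (k * x) mod int p) ` {a..<b}) \<le> K"
proof -
  define S where "S = (\<lambda>x. (k * x) mod int p) ` {a..<b}"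
  define J where "J = (\<lambda>x. x mod int p) ` {c..<d}"
  have S_sub: "S \<subseteq> {0..<int p}" and J_sub: "J \<subseteq> {0..<int p}"
    unfolding S_def J_def using p by auto
  consider "b \<le> a \<or> d \<le> c" | "int p \<le> b - a" | "int p \<le> d - c"
    | "a < b" "b - a < int p" "c < d" "d - c < int p"
    by linarith
  then have "disc p J S \<le> K"
  proof cases
    case 1
    then have "S = {} \<or> J = {}" unfolding S_def J_def by auto
    then show ?thesis using K by (auto simp: disc_def)
  next
    case 2
    then have "S = {0..<int p}" unfolding S_def by (rule image_mult_mod_interval[OF p cop])
    then show ?thesis using disc_of_full[OF J_sub] K by simp
  next
    case 3
    then have "J = {0..<int p}" unfolding J_def using image_mult_mod_interval[OF p, of 1] by simp
    then show ?thesis using disc_against_full[OF S_sub] K by simp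
  next
    case 4
    define N m where "N = nat (b - a)" and "m = nat (d - c)"
    have "card S = N" unfolding S_def N_def
      using 4 by (intro card_image_mult_mod_interval cop) simp
    moreover have "card J = m" unfolding J_def m_def
      using 4 card_image_mult_mod_interval[of 1 p d c] by simp
    moreover have "real (card (S \<inter> J)) = orbit_count (of_int k / p) (real m / p) (of_int (k * a - c) / p) N"
      unfolding S_def J_def N_def m_def using 4
      by (subst card_inter_mult_mod_interval_eq_orbit_count[OF p cop]) simp_all
    ultimately have "disc p J S = \<bar>orbit_count (of_int k / p) (real m / p) (of_int (k * a - c) / p) N - real N * (real m / p)\<bar>"
      unfolding disc_def by simp
    also have "\<dots> \<le> K" using 4 by (intro orbit) (simp_all add: N_def m_def)
    finally show ?thesis .
  qed
  then show ?thesis unfolding S_def J_def .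
qed

lemma perm_disc_mult_mod_le:
  fixes p :: nat and k :: int and K :: real
  assumes p: "p > 0" and cop: "coprime k (int p)" and K: "K \<ge> 0"
    and orbit: "\<And>x N m. N < p \<Longrightarrow> 0 < m \<Longrightarrow> m < p \<Longrightarrow>
      \<bar>orbit_count (of_int k / p) (real m / p) x N - real N * (real m / p)\<bar> \<le> K"
  shows "perm_disc p (\<lambda>s. (k * s) mod int p) \<le> K"
proof -
  define X where "X = {disc p J ((\<lambda>s. (k * s) mod int p) ` I) | I J. I \<in> zintervals p \<and> J \<in> zintervals p}"
  have "zintervals p \<subseteq> Pow {0..<int p}" unfolding zintervals_def using p by auto
  then have "X \<subseteq> (\<lambda>(I, J). disc p J ((\<lambda>s. (k * s) mod int p) ` I)) ` (Pow {0..<int p} \<times> Pow {0..<int p})"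
    unfolding X_def by fast
  then have "finite X" by (rule finite_subset) simp
  moreover have "X \<noteq> {}"
    unfolding X_def zintervals_def by blast
  moreover have "x \<le> K" if "x \<in> X" for x
  proof -
    obtain a b c d where x: "x = disc p ((\<lambda>x. x mod int p) ` {c..<d}) ((\<lambda>s. (k * s) mod int p) ` (\<lambda>x. x mod int p) ` {a..<b})"
      using \<open>x \<in> X\<close> unfolding X_def zintervals_def by blast
    have "(\<lambda>s. (k * s) mod int p) ` (\<lambda>x. x mod int p) ` {a..<b} = (\<lambda>x. (k * x) mod int p) ` {a..<b}"
      unfolding image_image by (simp add: mod_mult_right_eq)
    then show ?thesis unfolding x using disc_mult_mod_interval_le[OF p cop K orbit] by simp
  qed
  ultimately show ?thesis unfolding perm_disc_def X_def[symmetric] by simp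
qed

section \<open>Numbers with partial quotients bounded in average\<close>

lemma sqrt_2_notin_Rats: "sqrt 2 \<notin> \<rat>"
proof
  assume "sqrt 2 \<in> \<rat>"
  then obtain m n :: nat where n: "n \<noteq> 0" and "\<bar>sqrt 2\<bar> = real m / real n" and cop: "coprime m n"
    by (rule Rats_abs_nat_div_natE)
  then have "real m = sqrt 2 * real n" by (simp add: field_simps)
  then have "real (m\<^sup>2) = real (2 * n\<^sup>2)" by (simp add: power_mult_distrib)
  then have eq: "m\<^sup>2 = 2 * n\<^sup>2" by (simp only: of_nat_eq_iff)
  then have "even (m\<^sup>2)" by simp
  then have "even m" by simp
  then obtain j where "m = 2 * j" by blast
  with eq have "n\<^sup>2 = 2 * j\<^sup>2" by (simp add: power_mult_distrib)
  then have "even (n\<^sup>2)" by simp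
  then have "even n" by simp
  with \<open>even m\<close> cop show False by fastforce
qed

lemma sqrt_2_minus_1_in_bounded_avg_cf:
  assumes B: "B \<ge> 2"
  shows "sqrt 2 - 1 \<in> bounded_avg_cf B"
proof -
  define s where "s = sqrt (2::real)"
  have s: "1 < s" "s < 2" "s * s = 2"
    unfolding s_def by (simp_all add: real_less_rsqrt real_sqrt_less_iff[of 2 4, simplified])
  have inv: "1 / (s - 1) = s + 1" using s by (simp add: field_simps)
  have frac_minus: "frac (s - 1) = s - 1" using s by (simp add: frac_eq)
  have "s + 1 = (s - 1) + of_int 2" by simp
  then have frac_plus: "frac (s + 1) = s - 1" by (simp only: frac_add_of_int_right frac_minus)
  have rem: "cf_rem (s - 1) (Suc n) = s + 1" for n
    by (induction n) (simp_all add: frac_minus frac_plus inv)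
  have "cf_quot (s - 1) i = 2" if "i \<ge> 1" for i
    using that s rem[of "i - 1"] by (simp add: cf_quot_def floor_eq_iff)
  then have "real_of_int (\<Sum>i=1..m. cf_quot (s - 1) i) \<le> B * real m" for m
    using B mult_right_mono[OF B, of "real m"] by (simp add: mult.commute)
  moreover have "s - 1 \<notin> \<rat>"
    using sqrt_2_notin_Rats Rats_add[of "s - 1" 1] unfolding s_def by auto
  ultimately show ?thesis unfolding bounded_avg_cf_def s_def by auto
qed

lemma bounded_avg_cf_dist_1_ge:
  assumes \<alpha>: "\<alpha> \<in> bounded_avg_cf B"
  shows "\<bar>\<alpha> - 1\<bar> \<ge> 1 / (2 * B + 1)"
proof -
  have irr: "\<alpha> \<notin> \<rat>" and avg: "\<And>m. m \<ge> 1 \<Longrightarrow> real_of_int (\<Sum>i=1..m. cf_quot \<alpha> i) \<le> B * real m"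
    using \<alpha> unfolding bounded_avg_cf_def by auto
  define a0 a1 a2 where "a0 = cf_quot \<alpha> 0" and "a1 = cf_quot \<alpha> 1" and "a2 = cf_quot \<alpha> 2"
  define x1 x2 where "x1 = cf_rem \<alpha> 1" and "x2 = cf_rem \<alpha> 2"
  have a1_le: "a1 \<le> B" using avg[of 1] unfolding a1_def by simp
  have a12_le: "a1 + a2 \<le> 2 * B"
    using avg[of 2] unfolding a1_def a2_def by (simp add: numeral_2_eq_2)
  have \<alpha>_eq: "\<alpha> = a0 + 1 / x1"
    using cf_rem_eq_quot_plus_inverse[OF irr, of 0] unfolding a0_def x1_def by simp
  have x1_eq: "x1 = a1 + 1 / x2"
    using cf_rem_eq_quot_plus_inverse[OF irr, of 1] unfolding a1_def x1_def x2_def by (simp add: numeral_2_eq_2)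
  have x1: "1 < x1" "x1 < a1 + 1"
    using cf_rem_Suc_gt_1[OF irr, of 0] unfolding x1_def a1_def cf_quot_def by simp_all
  have x2: "1 < x2" "x2 < a2 + 1"
    using cf_rem_Suc_gt_1[OF irr, of 1] unfolding x2_def a2_def cf_quot_def by (simp_all add: numeral_2_eq_2)
  have a1: "a1 \<ge> 1" using cf_quot_Suc_ge_1[OF irr, of 0] unfolding a1_def by simp
  \<comment> \<open>If \<open>a0 \<ge> 1\<close> then \<open>\<alpha> - 1 > 1 / (a1 + 1)\<close>; otherwise \<open>\<alpha> \<le> 1 / (1 + 1 / x2) = 1 - 1 / (x2 + 1)\<close>.\<close>
  show ?thesis
  proof (cases "a0 \<ge> 1")
    case True
    have "1 / (2 * B + 1) \<le> 1 / (a1 + 1)" using a1_le a1 by (intro divide_left_mono) auto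
    also have "\<dots> < 1 / x1" using x1 by (intro divide_strict_left_mono) auto
    finally show ?thesis using \<alpha>_eq True by simp
  next
    case False
    have "1 + 1 / x2 \<le> x1" using x1_eq a1 by simp
    moreover have "0 < x1 * (1 + 1 / x2)" using x1 x2 by (simp add: add_pos_pos)
    ultimately have "1 / x1 \<le> 1 / (1 + 1 / x2)" by (intro divide_left_mono) auto
    also have "\<dots> = 1 - 1 / (x2 + 1)" using x2 by (simp add: field_simps)
    finally have "1 / x1 \<le> 1 - 1 / (x2 + 1)" .
    moreover have "1 / (2 * B + 1) < 1 / (x2 + 1)"
      using x2 a12_le a1 by (intro divide_strict_left_mono) auto
    ultimately show ?thesis using \<alpha>_eq False by simp
  qed
qed

lemma perm_disc_mult_mod_prime_le:
  fixes B \<alpha> :: real and p k :: nat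
  assumes B: "B \<ge> 0" and \<alpha>: "\<alpha> \<in> bounded_avg_cf B" and p: "prime p" and k: "k \<in> {1..<p}"
  shows "perm_disc p (\<lambda>s. (int k * s) mod int p)
    \<le> 6 * B * (log 2 p + 1) + 2 * \<bar>real k / p - \<alpha>\<bar> * (real p)\<^sup>2"
proof -
  define \<eta> where "\<eta> = \<bar>real k / p - \<alpha>\<bar>"
  define L where "L = nat \<lceil>log 2 p\<rceil>"
  have irr: "\<alpha> \<notin> \<rat>" and avg: "\<And>m. m \<ge> 1 \<Longrightarrow> real_of_int (\<Sum>i=1..m. cf_quot \<alpha> i) \<le> B * real m"
    using \<alpha> unfolding bounded_avg_cf_def by auto
  have p2: "p \<ge> 2" using p by (rule prime_ge_2_nat)
  have "real L = \<lceil>log 2 p\<rceil>" unfolding L_def using p2 by simp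
  then have L: "log 2 p \<le> L" "L \<le> log 2 p + 1" by linarith+
  have "real p \<le> 2 ^ L"
    using L(1) p2 by (simp add: log_le_iff powr_realpow)
  also have "\<dots> \<le> cf_denom \<alpha> (2 * L + 1)"
    using cf_denom_odd_ge_pow2[OF irr, of L] by (metis of_int_le_iff of_int_numeral of_int_power)
  finally have p_le: "real p \<le> cf_denom \<alpha> (2 * L + 1)" .
  have sum_le: "real_of_int (\<Sum>j=1..2 * L. cf_quot \<alpha> j) \<le> B * real (2 * L)"
    using avg[of "2 * L"] by (cases "L = 0") simp_all
  have "perm_disc p (\<lambda>s. (int k * s) mod int p) \<le> 6 * B * L + 2 * \<eta> * (real p)\<^sup>2"
  proof (rule perm_disc_mult_mod_le)
    have "\<not> p dvd k" using k by (auto dest: dvd_imp_le)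
    then have "coprime p k" using p by (intro prime_imp_coprime)
    then show "coprime (int k) (int p)" by (simp add: coprime_commute)
    fix x :: real and N m :: nat
    assume N: "N < p" and m: "0 < m" "m < p"
    have "int N < cf_denom \<alpha> (2 * L + 1)" using N p_le by linarith
    then have "\<bar>orbit_count (real k / p) (real m / p) x N - real N * (real m / p)\<bar>
        \<le> 3 * (\<Sum>j=1..2 * L. cf_quot \<alpha> j) + 2 * \<eta> * N\<^sup>2"
      using m unfolding \<eta>_def by (intro orbit_count_cf_deviation irr) auto
    also have "\<dots> \<le> 6 * B * L + 2 * \<eta> * (real p)\<^sup>2"
      using sum_le N unfolding \<eta>_def by (auto intro!: add_mono mult_left_mono power_mono)
    finally show "\<bar>orbit_count (of_int (int k) / p) (real m / p) x N - real N * (real m / p)\<bar>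
        \<le> 6 * B * L + 2 * \<eta> * (real p)\<^sup>2" by simp
  qed (use p2 B \<eta>_def in auto)
  also have "\<dots> \<le> 6 * B * (log 2 p + 1) + 2 * \<eta> * (real p)\<^sup>2"
    using L B by (simp add: mult_left_mono)
  finally show ?thesis unfolding \<eta>_def .
qed

lemma bounded_avg_cf_approximation_witness:
  fixes B c :: real and n :: nat
  assumes B: "B \<ge> 2" and n: "n > 0"
    and inf: "(INF \<alpha>\<in>bounded_avg_cf B. Min ((\<lambda>k. \<bar>real k / real n - \<alpha>\<bar>) ` {1..n})) \<le> c / (real n)\<^sup>2"
  obtains \<alpha> k where "\<alpha> \<in> bounded_avg_cf B" and "k \<in> {1..n}"
    and "\<bar>real k / real n - \<alpha>\<bar> * (real n)\<^sup>2 < c + 1"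
proof -
  let ?d = "\<lambda>\<alpha>. Min ((\<lambda>k. \<bar>real k / real n - \<alpha>\<bar>) ` {1..n})"
  have "?d ` bounded_avg_cf B \<noteq> {}" using sqrt_2_minus_1_in_bounded_avg_cf[OF B] by blast
  moreover have "bdd_below (?d ` bounded_avg_cf B)"
    using n by (intro bdd_belowI[of _ 0]) auto
  moreover have "Inf (?d ` bounded_avg_cf B) < (c + 1) / (real n)\<^sup>2"
    using inf n divide_strict_right_mono[of c "c + 1" "(real n)\<^sup>2"] by simp
  ultimately obtain \<alpha> where \<alpha>: "\<alpha> \<in> bounded_avg_cf B" and "?d \<alpha> < (c + 1) / (real n)\<^sup>2"
    using cInf_less_iff by (metis (no_types, lifting) imageE)
  moreover have "?d \<alpha> \<in> (\<lambda>k. \<bar>real k / real n - \<alpha>\<bar>) ` {1..n}" using n by (intro Min_in) auto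
  ultimately obtain k where "k \<in> {1..n}" and "\<bar>real k / real n - \<alpha>\<bar> < (c + 1) / (real n)\<^sup>2"
    by auto
  with \<alpha> show ?thesis using that n by (simp add: pos_less_divide_eq)
qed

lemma bounded_avg_cf_approximation_index_less:
  fixes B \<alpha> :: real and k p :: nat
  assumes \<alpha>: "\<alpha> \<in> bounded_avg_cf B" and B: "B \<ge> 0" and k: "k \<le> p"
    and close: "(2 * B + 1) * (\<bar>real k / p - \<alpha>\<bar> * (real p)\<^sup>2) < (real p)\<^sup>2"
  shows "k < p"
proof (rule ccontr)
  assume "\<not> k < p"
  with k have "k = p" by simp
  moreover have "p > 0" using close B by (cases "p = 0") auto
  ultimately have "((2 * B + 1) * \<bar>\<alpha> - 1\<bar>) * (real p)\<^sup>2 < 1 * (real p)\<^sup>2"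
    using close by (simp add: abs_minus_commute mult.assoc)
  then have "(2 * B + 1) * \<bar>\<alpha> - 1\<bar> < 1"
    using \<open>p > 0\<close> by (simp only: mult_less_cancel_right) simp
  then show False using bounded_avg_cf_dist_1_ge[OF \<alpha>] B by (simp add: divide_le_eq mult.commute)
qed

lemma log_bound_le_ln:
  fixes B C E x :: real
  assumes "B \<ge> 0" and "C \<ge> 0" and "1 \<le> ln x" and "E \<le> C * (ln x + 1)"
  shows "6 * B * (log 2 x + 1) + 2 * E \<le> (6 * B / ln 2 + 6 * B + 4 * C) * ln x"
proof -
  have "6 * B * (log 2 x + 1) = 6 * B / ln 2 * ln x + 6 * B"
    by (simp add: log_def field_simps)
  moreover have "6 * B * 1 \<le> 6 * B * ln x" using assms(1,3) by (intro mult_left_mono) auto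
  moreover have "C * (ln x + 1) \<le> C * (2 * ln x)" using assms(2,3) by (intro mult_left_mono) auto
  ultimately show ?thesis using assms(4) by (simp add: algebra_simps)
qed

lemma exists_multiplier_perm_disc_le_ln:
  fixes B C :: real and p :: nat
  assumes B: "B \<ge> 2" and p: "prime p" "3 \<le> p" "(\<bar>C\<bar> + 1) * (2 * B + 1) < p"
    and approx: "(INF \<alpha>\<in>bounded_avg_cf B. Min ((\<lambda>k. \<bar>real k / real p - \<alpha>\<bar>) ` {1..p}))
      \<le> C * ln (real p) / (real p)\<^sup>2"
  shows "\<exists>k\<in>{1..<p}. perm_disc p (\<lambda>s. (int k * s) mod int p)
    \<le> (6 * B / ln 2 + 6 * B + 4 * (\<bar>C\<bar> + 1)) * ln (real p)"
proof -
  define C1 where "C1 = \<bar>C\<bar> + 1"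
  have ln_p: "1 \<le> ln (real p)" "ln (real p) + 1 \<le> p"
    using p(2) exp_le ln_le_minus_one[of "real p"] by (simp_all add: ln_ge_iff)
  obtain \<alpha> k where \<alpha>: "\<alpha> \<in> bounded_avg_cf B" and k: "k \<in> {1..p}"
    and close: "\<bar>real k / p - \<alpha>\<bar> * (real p)\<^sup>2 < C * ln (real p) + 1"
    by (rule bounded_avg_cf_approximation_witness[OF B _ approx]) (use p(2) in auto)
  have "C * ln (real p) \<le> \<bar>C\<bar> * ln (real p)" using ln_p(1) by (intro mult_right_mono) auto
  moreover have "C1 * (ln (real p) + 1) = \<bar>C\<bar> * ln (real p) + \<bar>C\<bar> + ln (real p) + 1"
    unfolding C1_def by (simp add: algebra_simps)
  ultimately have \<eta>: "\<bar>real k / p - \<alpha>\<bar> * (real p)\<^sup>2 \<le> C1 * (ln (real p) + 1)"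
    using close ln_p(1) abs_ge_zero[of C] by linarith
  also have "\<dots> \<le> C1 * real p" using ln_p(2) unfolding C1_def by (simp add: mult_left_mono)
  finally have "(2 * B + 1) * (\<bar>real k / p - \<alpha>\<bar> * (real p)\<^sup>2) \<le> (2 * B + 1) * (C1 * real p)"
    using B by (intro mult_left_mono) auto
  also have "\<dots> = (C1 * (2 * B + 1)) * real p" by (simp add: algebra_simps)
  also have "\<dots> < real p * real p"
    using p(2,3) unfolding C1_def by (intro mult_strict_right_mono) auto
  finally have "k < p"
    using k B by (intro bounded_avg_cf_approximation_index_less[OF \<alpha>]) (auto simp: power2_eq_square)
  with k have k: "k \<in> {1..<p}" by simp
  have "perm_disc p (\<lambda>s. (int k * s) mod int p)
      \<le> 6 * B * (log 2 p + 1) + 2 * (\<bar>real k / p - \<alpha>\<bar> * (real p)\<^sup>2)"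
    using perm_disc_mult_mod_prime_le[OF _ \<alpha> p(1) k] B by simp
  also have "\<dots> \<le> (6 * B / ln 2 + 6 * B + 4 * C1) * ln (real p)"
    using B ln_p(1) \<eta> unfolding C1_def by (intro log_bound_le_ln) auto
  finally show ?thesis using k unfolding C1_def by blast
qed

theorem mainTheorem16:
  fixes B :: real
  assumes "B \<ge> 2"
    and "\<exists>C::real. \<forall>\<^sub>F n in sequentially.
           (INF \<alpha>\<in>bounded_avg_cf B. Min ((\<lambda>k. \<bar>real k / real n - \<alpha>\<bar>) ` {1..n}))
             \<le> C * ln (real n) / (real n)^2"
  shows "\<exists>C'::real. \<forall>\<^sub>F p in sequentially. prime (p::nat) \<longrightarrow>
           (\<exists>k\<in>{1..<p}. perm_disc p (\<lambda>s. (int k * s) mod int p) \<le> C' * ln (real p))"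
proof -
  obtain C where approx: "\<forall>\<^sub>F n in sequentially.
      (INF \<alpha>\<in>bounded_avg_cf B. Min ((\<lambda>k. \<bar>real k / real n - \<alpha>\<bar>) ` {1..n})) \<le> C * ln (real n) / (real n)^2"
    using assms(2) by blast
  obtain N :: nat where N: "(\<bar>C\<bar> + 1) * (2 * B + 1) < N" using reals_Archimedean2 by blast
  have "\<forall>\<^sub>F p in sequentially. prime p \<longrightarrow> (\<exists>k\<in>{1..<p}.
      perm_disc p (\<lambda>s. (int k * s) mod int p) \<le> (6 * B / ln 2 + 6 * B + 4 * (\<bar>C\<bar> + 1)) * ln (real p))"
    using approx eventually_ge_at_top[of "max N 3"]
  proof eventually_elim
    case (elim p)
    then show ?case using N by (intro impI exists_multiplier_perm_disc_le_ln[OF assms(1)]) auto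
  qed
  then show ?thesis by blast
qed

end
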